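(* For every integer $j\ge0$ let \[ \beta_j(x)=\sum_{s=0}^j\binom{j-\frac12}{s}\binom{j}{s}x^{2j-2s}(x^2-1)^s . \] Then $\beta_j(x)=P_{2j}(x)$, where $P_n(x)=\frac{1}{2^nn!}\frac{d^n}{dx^n}(x^2-1)^n$ is the $n$-th Legendre polynomial.
   Context: $\binom{j-\frac12}{s}=\frac{(j-\frac12)(j-\frac32)\cdots(j-\frac12-s+1)}{s!}$. *)

theory Defs
  imports Complex_Main "HOL-Computational_Algebra.Polynomial"
begin

definition legendre_poly :: "nat \<Rightarrow> real poly" where
  "legendre_poly n = smult (1 / (2 ^ n * fact n)) ((pderiv ^^ n) ([:-1, 0, 1:] ^ n))"

definition beta :: "nat \<Rightarrow> real \<Rightarrow> real" where
  "beta j x = (\<Sum>s=0..j. ((real j - 1/2) gchoose s) * real (j choose s)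
                 * x ^ (2*j - 2*s) * (x^2 - 1) ^ s)"

end

theory Submission
  imports Defs
begin

(* By Taylor's formula, (d/dx)^n U(x)^n / n! is the coefficient of h^n in
   U(x + h)^n = (x^2 - 1 + 2 x h + h^2)^n, where U(x) = x^2 - 1.  Expanding this
   trinomial power gives the classical formula
     P_n(x) = \<Sum>c. C(n,c) C(n-c,c) x^(n-2c) ((x^2 - 1)/4)^c,
   and for n = 2j the duplication formula for the Pochhammer symbol turns
   C(2j,c) C(2j-c,c) / 4^c into C(j - 1/2, c) C(j, c). *)

lemma pcompose_power_left: "(p ^ k) \<circ>\<^sub>p q = (p \<circ>\<^sub>p q) ^ k"
  for p q :: "'a::comm_semiring_1 poly"
  by (induction k) (simp_all add: pcompose_1 pcompose_mult)

lemma coeff_pcompose_shift: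
  fixes p :: "'a::field_char_0 poly"
  shows "coeff (p \<circ>\<^sub>p [:a, 1:]) m = poly ((pderiv ^^ m) p) a / fact m"
proof (induction m arbitrary: p)
  case 0
  then show ?case by simp
next
  case (Suc m)
  have "pderiv (p \<circ>\<^sub>p [:a, 1:]) = pderiv p \<circ>\<^sub>p [:a, 1:]"
    by (simp add: pderiv_pcompose pderiv_pCons)
  then have "of_nat (Suc m) * coeff (p \<circ>\<^sub>p [:a, 1:]) (Suc m) =
             coeff (pderiv p \<circ>\<^sub>p [:a, 1:]) m"
    by (metis coeff_pderiv)
  then show ?case
    using Suc.IH[of "pderiv p"]
    by (simp add: funpow_Suc_right field_simps del: funpow.simps of_nat_Suc)
qed

lemma coeff_monic_quadratic_power_middle:
  fixes a b :: "'a::comm_semiring_1"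
  shows "coeff ([:a, b, 1:] ^ n) n =
           (\<Sum>c\<le>n. of_nat ((n choose c) * (n - c choose c)) * a ^ c * b ^ (n - 2*c))"
proof -
  have const_right: "p * [:r:] = smult r p" for p :: "'a poly" and r
    by simp
  have "[:a, b, 1:] ^ n = ([:a:] + monom 1 1 * [:b, 1:]) ^ n"
    by (simp add: monom_altdef)
  also have "\<dots> = (\<Sum>c\<le>n. smult (a ^ c * of_nat (n choose c)) (monom 1 (n - c) * [:b, 1:] ^ (n - c)))"
    by (subst binomial_ring)
      (simp add: monom_power power_mult_distrib poly_const_pow of_nat_poly const_right
        del: mult_pCons_right)
  finally have expand: "[:a, b, 1:] ^ n = \<dots>" .
  have middle: "coeff ([:b, 1:] ^ (n - c)) c = of_nat (n - c choose c) * b ^ (n - 2*c)" for c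
  proof (cases "c \<le> n - c")
    case True
    then show ?thesis by (simp add: coeff_linear_poly_power mult_2)
  next
    case False
    then have "degree ([:b, 1:] ^ (n - c)) < c"
      using degree_power_le[of "[:b, 1:]" "n - c"] by simp
    then show ?thesis using False by (simp add: coeff_eq_0 binomial_eq_0)
  qed
  show ?thesis
    unfolding expand coeff_sum
    by (intro sum.cong refl) (simp add: coeff_monom_mult middle of_nat_mult mult_ac)
qed

lemma poly_legendre_poly:
  "poly (legendre_poly n) x =
     (\<Sum>c\<le>n. real ((n choose c) * (n - c choose c)) * x ^ (n - 2*c) * ((x^2 - 1) / 4) ^ c)"
proof -
  have shift: "[:-1, 0, 1:] \<circ>\<^sub>p [:x, 1:] = [:x^2 - 1, 2*x, 1:]"
    by (simp add: pcompose_pCons power2_eq_square algebra_simps)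
  have "poly (legendre_poly n) x = coeff (([:-1, 0, 1:] ^ n) \<circ>\<^sub>p [:x, 1:]) n / 2 ^ n"
    by (simp add: legendre_poly_def coeff_pcompose_shift field_simps)
  also have "\<dots> =
      (\<Sum>c\<le>n. real ((n choose c) * (n - c choose c)) * (x^2 - 1) ^ c * (2*x) ^ (n - 2*c)) / 2 ^ n"
    by (simp add: pcompose_power_left shift coeff_monic_quadratic_power_middle)
  also have "\<dots> = (\<Sum>c\<le>n. real ((n choose c) * (n - c choose c)) * x ^ (n - 2*c) * ((x^2 - 1) / 4) ^ c)"
    unfolding sum_divide_distrib
  proof (intro sum.cong refl)
    fix c
    show "real ((n choose c) * (n - c choose c)) * (x^2 - 1) ^ c * (2*x) ^ (n - 2*c) / 2 ^ n =
          real ((n choose c) * (n - c choose c)) * x ^ (n - 2*c) * ((x^2 - 1) / 4) ^ c"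
    proof (cases "2*c \<le> n")
      case True
      then have "(2::real) ^ n = 2 ^ (n - 2*c) * 2 ^ (2*c)"
        by (simp flip: power_add)
      then have "(2::real) ^ n = 2 ^ (n - 2*c) * 4 ^ c"
        by (simp add: power_mult)
      then show ?thesis
        by (simp add: power_mult_distrib power_divide)
    next
      case False
      then show ?thesis by (simp add: binomial_eq_0)
    qed
  qed
  finally show ?thesis .
qed

lemma gbinomial_half_times_binomial:
  assumes "s \<le> j"
  shows "((real j - 1/2) gchoose s) * real (j choose s) =
           real ((2*j choose s) * (2*j - s choose s)) / 4 ^ s"
proof -
  define t where "t = j - s"
  have j: "j = t + s" and jj: "2*j = 2*t + 2*s" "2*j - s = 2*t + s"
    using assms by (simp_all add: t_def)
  have "((real j - 1/2) gchoose s) * real (j choose s)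
        = pochhammer (real t + 1/2) s * pochhammer (real t + 1) s / (fact s * fact s)"
    by (simp add: binomial_gbinomial gbinomial_pochhammer' j algebra_simps)
  also have "pochhammer (real t + 1/2) s * pochhammer (real t + 1) s =
             fact (2*j) / (fact (2*t) * 4 ^ s)"
  proof -
    have "fact (2*j) = fact (2*t) * pochhammer (2 * real t + 1) (2*s)"
      using pochhammer_product'[of "1::real" "2*t" "2*s"]
      by (simp add: pochhammer_fact jj add.commute)
    also have "pochhammer (2 * real t + 1) (2*s) =
               4 ^ s * (pochhammer (real t + 1/2) s * pochhammer (real t + 1) s)"
    proof -
      have "(2::real) ^ (2*s) = 4 ^ s"
        by (simp add: power_mult)
      then show ?thesis
        using pochhammer_double[of "real t + 1/2" s] by (simp add: algebra_simps)
    qed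
    finally show ?thesis by simp
  qed
  also have "fact (2*j) / (fact (2*t) * 4 ^ s) / (fact s * fact s) =
             real ((2*j choose s) * (2*j - s choose s)) / 4 ^ s"
    by (simp add: binomial_fact jj)
  finally show ?thesis .
qed

theorem lemma6p8:
  fixes j :: nat and x :: real
  shows "beta j x = poly (legendre_poly (2*j)) x"
proof -
  have "poly (legendre_poly (2*j)) x =
        (\<Sum>s\<le>j. real ((2*j choose s) * (2*j - s choose s)) * x ^ (2*j - 2*s) * ((x^2 - 1) / 4) ^ s)"
    unfolding poly_legendre_poly
    by (rule sum.mono_neutral_right) (auto simp: binomial_eq_0)
  also have "\<dots> = beta j x"
    unfolding beta_def atLeast0AtMost
    by (intro sum.cong refl) (simp add: gbinomial_half_times_binomial power_divide)
  finally show ?thesis ..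
qed

end
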